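(* For every $n\times r$ basis matrix $P$ and every positive integer $s$, $\delta_s(I-PP')=\kappa_s^2(P)$.
   Context: A basis matrix is a real matrix $P$ with $P'P=I$. For $T\subseteq\{1,\dots,n\}$, $I_T$ is the submatrix of the $n\times n$ identity with columns in $T$, and $\Psi_T:=\Psi I_T$. The $s$-restricted isometry constant $\delta_s(\Psi)$ of an $n\times m$ matrix $\Psi$ is the smallest real number such that $(1-\delta_s)\|x\|_2^2\le\|\Psi_Tx\|_2^2\le(1+\delta_s)\|x\|_2^2$ for all $T$ with $|T|\le s$ and all $x\in\mathbb R^{|T|}$. The denseness coefficient is $\kappa_s(B):=\max_{|T|\le s}\|I_T'\,\mathrm{basis}(B)\|_2$, where $\mathrm{basis}(B)$ is a basis matrix with the same column span as $B$; for a basis matrix $P$, $\kappa_s(P)=\max_{|T|\le s}\|I_T'P\|_2$. *)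

theory Defs
  imports "HOL-Analysis.Analysis"
begin

definition basis_matrix :: "real^'r^'n \<Rightarrow> bool" where
  "basis_matrix P \<longleftrightarrow> transpose P ** P = mat 1"

text \<open>I_T' v : the entries of v indexed by T. We keep it as a vector of the ambient
  dimension with the entries outside T set to zero (same Euclidean norm).\<close>
definition restr :: "'n set \<Rightarrow> real^'n \<Rightarrow> real^'n" where
  "restr T v = (\<chi> i. if i \<in> T then v $ i else 0)"

text \<open>s-restricted isometry constant. Psi_T x with x in R^|T| equals Psi *v (I_T x), and
  I_T x ranges exactly over the vectors supported in T, with the same norm.\<close>
definition ric :: "nat \<Rightarrow> real^'m^'n \<Rightarrow> real" where
  "ric s \<Psi> = (LEAST \<delta>. \<forall>T::'m set. card T \<le> s \<longrightarrow>
      (\<forall>x::real^'m. (\<forall>i. i \<notin> T \<longrightarrow> x $ i = 0) \<longrightarrow>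
         (1 - \<delta>) * (norm x)^2 \<le> (norm (\<Psi> *v x))^2 \<and>
         (norm (\<Psi> *v x))^2 \<le> (1 + \<delta>) * (norm x)^2))"

definition kappa :: "nat \<Rightarrow> real^'r^'n \<Rightarrow> real" where
  "kappa s P = Max {onorm (\<lambda>x. restr T (P *v x)) | T::'n set. card T \<le> s}"

end

theory Submission
  imports Defs
begin

text \<open>For a basis matrix \<open>P\<close> the matrix \<open>I - PP'\<close> is the orthogonal projection onto the
  complement of the column span of \<open>P\<close>, so \<open>\<parallel>(I - PP')x\<parallel>\<^sup>2 = \<parallel>x\<parallel>\<^sup>2 - \<parallel>P'x\<parallel>\<^sup>2\<close>. The upper
  isometry inequality is therefore free, and the lower one for \<open>x\<close> supported in \<open>T\<close> says
  \<open>\<parallel>P'x\<parallel> \<le> \<surd>\<delta> \<parallel>x\<parallel>\<close>, i.e. that the adjoint \<open>P' I\<^sub>T\<close> of \<open>I\<^sub>T' P\<close> has norm at most \<open>\<surd>\<delta>\<close>.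
  An operator and its adjoint have the same norm, so the least admissible \<open>\<delta>\<close> is
  \<open>max\<^sub>|\<^sub>T\<^sub>|\<^sub>\<le>\<^sub>s \<parallel>I\<^sub>T' P\<parallel>\<^sup>2 = \<kappa>\<^sub>s(P)\<^sup>2\<close>; \<open>s > 0\<close> is needed to see that this \<open>\<delta>\<close> cannot be negative.\<close>

declare transpose_matrix_vector [simp del]

abbreviation supported_in :: "'n set \<Rightarrow> 'a::zero^'n \<Rightarrow> bool" where
  "supported_in T x \<equiv> \<forall>i. i \<notin> T \<longrightarrow> x $ i = 0"

definition restricted_isometry :: "nat \<Rightarrow> real^'m^'n \<Rightarrow> real \<Rightarrow> bool" where
  "restricted_isometry s \<Psi> \<delta> \<longleftrightarrow> (\<forall>T::'m set. card T \<le> s \<longrightarrow>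
      (\<forall>x. supported_in T x \<longrightarrow>
         (1 - \<delta>) * (norm x)^2 \<le> (norm (\<Psi> *v x))^2 \<and>
         (norm (\<Psi> *v x))^2 \<le> (1 + \<delta>) * (norm x)^2))"

lemma ric_eq_Least: "ric s \<Psi> = (LEAST \<delta>. restricted_isometry s \<Psi> \<delta>)"
  by (simp add: ric_def restricted_isometry_def)

lemma restricted_isometry_nonneg:
  fixes \<Psi> :: "real^'m^'n"
  assumes "restricted_isometry s \<Psi> \<delta>" and "0 < s"
  shows "0 \<le> \<delta>"
proof -
  obtain i :: 'm where "i \<in> UNIV" by blast
  have "supported_in {i} (axis i (1::real))"
    by (simp add: axis_def)
  then have "1 - \<delta> \<le> 1 + \<delta>"
    using assms unfolding restricted_isometry_def by (force simp: norm_axis_1)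
  then show ?thesis by simp
qed

lemma inner_matrix_vector_transpose:
  "inner ((A::real^'m^'n) *v x) y = inner x (transpose A *v y)"
  by (metis dot_lmul_matrix inner_commute transpose_matrix_vector)

lemma norm_adjoint_le:
  fixes f :: "'a::real_inner \<Rightarrow> 'b::real_inner"
  assumes adjoint: "\<And>x y. inner (f x) y = inner x (g y)"
    and bound: "\<And>x. norm (f x) \<le> c * norm x" and "0 \<le> c"
  shows "norm (g y) \<le> c * norm y"
proof -
  have "norm (g y) * norm (g y) = inner (f (g y)) y"
    by (simp add: adjoint power2_norm_eq_inner[symmetric] power2_eq_square)
  also have "\<dots> \<le> norm (f (g y)) * norm y"
    by (rule norm_cauchy_schwarz)
  also have "\<dots> \<le> norm (g y) * (c * norm y)"
    using mult_right_mono[OF bound norm_ge_zero] by (simp add: algebra_simps)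
  finally show ?thesis
    using \<open>0 \<le> c\<close> by (cases "g y = 0") auto
qed

lemma inner_restr_left: "inner (restr T u) v = inner u (restr T v)"
  unfolding restr_def inner_vec_def by (auto intro!: sum.cong)

lemma restr_eq_self: "supported_in T x \<Longrightarrow> restr T x = x"
  unfolding restr_def by (auto simp: vec_eq_iff)

lemma supported_in_restr: "supported_in T (restr T x)"
  by (simp add: restr_def)

lemma norm_restr_le: "norm (restr T (x::real^'n)) \<le> norm x"
  unfolding norm_vec_def restr_def by (auto intro!: L2_set_mono)

lemma bounded_linear_restr_matrix_vector:
  "bounded_linear (\<lambda>x. restr T ((P::real^'r^'n) *v x))"
proof -
  have "linear (\<lambda>x. restr T (P *v x))"
    by (rule linearI) (auto simp: restr_def vec_eq_iff matrix_vector_mult_def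
        sum_distrib_left algebra_simps sum.distrib)
  then show ?thesis
    by (simp add: linear_conv_bounded_linear)
qed

text \<open>The adjoint of \<open>y \<mapsto> I\<^sub>T' P y\<close> is \<open>x \<mapsto> P' I\<^sub>T x\<close>, which agrees with \<open>P'\<close> on vectors
  supported in \<open>T\<close> and does not increase the norm of the others.\<close>

lemma onorm_restr_matrix_le_iff:
  fixes P :: "real^'r^'n"
  assumes "0 \<le> c"
  shows "onorm (\<lambda>y. restr T (P *v y)) \<le> c \<longleftrightarrow>
    (\<forall>x. supported_in T x \<longrightarrow> norm (transpose P *v x) \<le> c * norm x)"
proof -
  have adjoint: "inner (restr T (P *v y)) x = inner y (transpose P *v restr T x)" for x y
    by (simp only: inner_restr_left inner_matrix_vector_transpose)
  show ?thesis
  proof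
    assume "onorm (\<lambda>y. restr T (P *v y)) \<le> c"
    then have bound: "norm (restr T (P *v y)) \<le> c * norm y" for y
      using onorm[OF bounded_linear_restr_matrix_vector, of T P y]
      by (meson mult_right_mono norm_ge_zero order_trans)
    have "norm (transpose P *v restr T x) \<le> c * norm x" for x
      by (rule norm_adjoint_le[OF adjoint bound \<open>0 \<le> c\<close>])
    then show "\<forall>x. supported_in T x \<longrightarrow> norm (transpose P *v x) \<le> c * norm x"
      by (metis restr_eq_self)
  next
    assume transpose_bound: "\<forall>x. supported_in T x \<longrightarrow> norm (transpose P *v x) \<le> c * norm x"
    have "norm (transpose P *v restr T x) \<le> c * norm x" for x
    proof -
      have "norm (transpose P *v restr T x) \<le> c * norm (restr T x)"
        using transpose_bound supported_in_restr by blast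
      also have "\<dots> \<le> c * norm x"
        by (rule mult_left_mono[OF norm_restr_le \<open>0 \<le> c\<close>])
      finally show ?thesis .
    qed
    then have "norm (restr T (P *v y)) \<le> c * norm y" for y
      using adjoint \<open>0 \<le> c\<close> by (intro norm_adjoint_le[where f = "\<lambda>x. transpose P *v restr T x"])
        (auto simp: inner_commute)
    then show "onorm (\<lambda>y. restr T (P *v y)) \<le> c"
      by (rule onorm_le)
  qed
qed

lemma norm_projection_complement_squared:
  assumes "basis_matrix P"
  shows "(norm ((mat 1 - P ** transpose P) *v x))^2 = (norm x)^2 - (norm (transpose P *v x))^2"
proof -
  define y where "y = transpose P *v x"
  have projection: "(mat 1 - P ** transpose P) *v x = x - P *v y"
    unfolding y_def by (simp add: matrix_vector_mult_diff_rdistrib matrix_vector_mul_assoc)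
  have "inner (P *v y) (P *v y) = inner y ((transpose P ** P) *v y)"
    by (simp only: inner_matrix_vector_transpose matrix_vector_mul_assoc)
  then have isometry: "inner (P *v y) (P *v y) = inner y y"
    using assms by (simp add: basis_matrix_def)
  have "inner x (P *v y) = inner y y"
    by (simp add: inner_commute inner_matrix_vector_transpose y_def)
  then show ?thesis
    unfolding projection power2_norm_eq_inner y_def[symmetric] using isometry
    by (simp add: inner_diff_left inner_diff_right inner_commute)
qed

lemma kappa_le_iff:
  fixes P :: "real^'r^'n"
  shows "kappa s P \<le> c \<longleftrightarrow> (\<forall>T::'n set. card T \<le> s \<longrightarrow> onorm (\<lambda>y. restr T (P *v y)) \<le> c)"
proof -
  have "finite {onorm (\<lambda>y. restr T (P *v y)) | T::'n set. card T \<le> s}"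
    by (rule finite_subset[of _ "range (\<lambda>T. onorm (\<lambda>y. restr T (P *v y)))"]) auto
  moreover have "onorm (\<lambda>y. restr {} (P *v y)) \<in> {onorm (\<lambda>y. restr T (P *v y)) | T::'n set. card T \<le> s}"
    by auto
  ultimately show ?thesis
    unfolding kappa_def by (subst Max_le_iff) auto
qed

lemma kappa_nonneg:
  fixes P :: "real^'r^'n"
  shows "0 \<le> kappa s P"
proof -
  have "0 \<le> onorm (\<lambda>y. restr {} (P *v y))"
    by (rule onorm_pos_le[OF bounded_linear_restr_matrix_vector])
  also have "\<dots> \<le> kappa s P"
    using kappa_le_iff[of s P "kappa s P"] by simp
  finally show ?thesis .
qed

lemma kappa_squared_le_iff:
  fixes P :: "real^'r^'n"
  assumes "0 \<le> \<delta>"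
  shows "(kappa s P)^2 \<le> \<delta> \<longleftrightarrow> (\<forall>T x. card T \<le> s \<longrightarrow> supported_in T x \<longrightarrow>
      (norm (transpose P *v x))^2 \<le> \<delta> * (norm x)^2)"
proof -
  have square_le_iff: "a^2 \<le> \<delta> * b^2 \<longleftrightarrow> a \<le> sqrt \<delta> * b" if "0 \<le> a" "0 \<le> b" for a b :: real
    using that assms by (metis abs_le_square_iff abs_of_nonneg mult_nonneg_nonneg
        power_mult_distrib real_sqrt_ge_zero real_sqrt_pow2)
  have "(kappa s P)^2 \<le> \<delta> \<longleftrightarrow> kappa s P \<le> sqrt \<delta>"
    using square_le_iff[of "kappa s P" 1] kappa_nonneg[of s P] by simp
  also have "\<dots> \<longleftrightarrow> (\<forall>T x. card T \<le> s \<longrightarrow> supported_in T x \<longrightarrow>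
      norm (transpose P *v x) \<le> sqrt \<delta> * norm x)"
    by (simp add: kappa_le_iff onorm_restr_matrix_le_iff assms)
  finally show ?thesis
    by (simp add: square_le_iff)
qed

lemma restricted_isometry_projection_complement_iff:
  fixes P :: "real^'r^'n"
  assumes P: "basis_matrix P" and "0 < s"
  shows "restricted_isometry s (mat 1 - P ** transpose P) \<delta> \<longleftrightarrow> (kappa s P)^2 \<le> \<delta>"
proof -
  let ?M = "mat 1 - P ** transpose P"
  have lower_iff: "(1 - \<delta>) * (norm x)^2 \<le> (norm (?M *v x))^2 \<longleftrightarrow>
      (norm (transpose P *v x))^2 \<le> \<delta> * (norm x)^2" for x :: "real^'n"
    by (simp add: norm_projection_complement_squared[OF P] left_diff_distrib)
  have upper: "(norm (?M *v x))^2 \<le> (1 + \<delta>) * (norm x)^2" if "0 \<le> \<delta>" for x :: "real^'n"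
    using that by (simp add: norm_projection_complement_squared[OF P] distrib_right)
      (smt (verit) mult_nonneg_nonneg zero_le_power2)
  show ?thesis
  proof
    assume isometry: "restricted_isometry s ?M \<delta>"
    then have "0 \<le> \<delta>"
      using \<open>0 < s\<close> by (rule restricted_isometry_nonneg)
    moreover have "\<forall>T x. card T \<le> s \<longrightarrow> supported_in T x \<longrightarrow>
        (norm (transpose P *v x))^2 \<le> \<delta> * (norm x)^2"
      using isometry lower_iff unfolding restricted_isometry_def by blast
    ultimately show "(kappa s P)^2 \<le> \<delta>"
      by (simp add: kappa_squared_le_iff)
  next
    assume kappa_le: "(kappa s P)^2 \<le> \<delta>"
    then have "0 \<le> \<delta>"
      using zero_le_power2 order_trans by blast
    with kappa_le show "restricted_isometry s ?M \<delta>"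
      unfolding restricted_isometry_def by (simp add: kappa_squared_le_iff lower_iff upper)
  qed
qed

theorem lemma4:
  fixes P :: "real^'r^'n" and s :: nat
  assumes "basis_matrix P" and "0 < s"
  shows "ric s (mat 1 - P ** transpose P) = (kappa s P)^2"
  unfolding ric_eq_Least restricted_isometry_projection_complement_iff[OF assms]
  by (rule Least_equality) auto

end
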